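(* Let $R$ be a semiprimary ring of Loewy length $\ell$ with Jacobson radical $\mathscr{J}$. Then $R$ is rigid if and only if, for all $1\le i\le\ell$, $$\{x\in R\mid \mathscr{J}^{\ell-i}x=0\}=\mathscr{J}^i=\{x\in R\mid x\mathscr{J}^{\ell-i}=0\}.$$
   Context: A ring $R$ is semiprimary if its Jacobson radical $\mathscr{J}$ is nilpotent and $R/\mathscr{J}$ is semisimple; its Loewy length $\ell$ is the nilpotency index of $\mathscr{J}$, with $\mathscr{J}^0=R$. A finite-length module is rigid if it has exactly one Loewy filtration (a filtration with semisimple subquotients of minimal length); $R$ is rigid if both the left regular module ${}_RR$ and the right regular module $R_R$ are rigid. *)

theory Defs
  imports Main
begin

text \<open>The ring R is the whole type 'a of class ring_1 (unital, not necessarily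
commutative).  Submodules of the left (right) regular module are the left (right)
ideals.\<close>

definition left_ideal :: "'a::ring_1 set \<Rightarrow> bool" where
  "left_ideal L \<longleftrightarrow> 0 \<in> L \<and> (\<forall>x\<in>L. \<forall>y\<in>L. x - y \<in> L) \<and> (\<forall>r x. x \<in> L \<longrightarrow> r * x \<in> L)"

definition right_ideal :: "'a::ring_1 set \<Rightarrow> bool" where
  "right_ideal L \<longleftrightarrow> 0 \<in> L \<and> (\<forall>x\<in>L. \<forall>y\<in>L. x - y \<in> L) \<and> (\<forall>r x. x \<in> L \<longrightarrow> x * r \<in> L)"

definition maximal_left_ideal :: "'a::ring_1 set \<Rightarrow> bool" where
  "maximal_left_ideal L \<longleftrightarrow> left_ideal L \<and> L \<noteq> UNIV \<and>
     (\<forall>L'. left_ideal L' \<and> L \<subseteq> L' \<longrightarrow> L' = L \<or> L' = UNIV)"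

definition jrad :: "'a::ring_1 set" where
  "jrad = \<Inter>{L. maximal_left_ideal L}"

inductive_set set_mult :: "'a::ring_1 set \<Rightarrow> 'a set \<Rightarrow> 'a set" for A B where
  prod: "a \<in> A \<Longrightarrow> b \<in> B \<Longrightarrow> a * b \<in> set_mult A B"
| zero: "0 \<in> set_mult A B"
| diff: "x \<in> set_mult A B \<Longrightarrow> y \<in> set_mult A B \<Longrightarrow> x - y \<in> set_mult A B"

primrec set_pow :: "'a::ring_1 set \<Rightarrow> nat \<Rightarrow> 'a set" where
  "set_pow A 0 = UNIV"
| "set_pow A (Suc n) = set_mult A (set_pow A n)"

definition set_plus :: "'a::ring_1 set \<Rightarrow> 'a set \<Rightarrow> 'a set" where
  "set_plus K K' = {x + y | x y. x \<in> K \<and> y \<in> K'}"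

text \<open>For submodules A \<subseteq> B (w.r.t. the submodule predicate P), the subquotient B/A
is semisimple: every submodule of B/A (i.e. every K with A \<subseteq> K \<subseteq> B) is a direct
summand.\<close>
definition ss_subquot :: "('a::ring_1 set \<Rightarrow> bool) \<Rightarrow> 'a set \<Rightarrow> 'a set \<Rightarrow> bool" where
  "ss_subquot P A B \<longleftrightarrow> A \<subseteq> B \<and>
     (\<forall>K. P K \<and> A \<subseteq> K \<and> K \<subseteq> B \<longrightarrow>
        (\<exists>K'. P K' \<and> A \<subseteq> K' \<and> K' \<subseteq> B \<and> set_plus K K' = B \<and> K \<inter> K' = A))"

definition semiprimary :: "'a::ring_1 itself \<Rightarrow> bool" where
  "semiprimary _ \<longleftrightarrow> (\<exists>n. set_pow (jrad::'a set) n = {0}) \<and> ss_subquot left_ideal (jrad::'a set) UNIV"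

definition loewy_length :: "'a::ring_1 itself \<Rightarrow> nat" where
  "loewy_length _ = (LEAST n. set_pow (jrad::'a set) n = {0})"

text \<open>A filtration 0 = F_0 \<subseteq> ... \<subseteq> F_n = R of the regular module (list of length n+1)
with semisimple subquotients; a Loewy filtration is one of minimal length.\<close>
definition ss_filtration :: "('a::ring_1 set \<Rightarrow> bool) \<Rightarrow> 'a set list \<Rightarrow> bool" where
  "ss_filtration P Fs \<longleftrightarrow> Fs \<noteq> [] \<and> hd Fs = {0} \<and> last Fs = UNIV \<and> (\<forall>X\<in>set Fs. P X) \<and>
     (\<forall>k. Suc k < length Fs \<longrightarrow> Fs ! k \<subseteq> Fs ! Suc k \<and> ss_subquot P (Fs ! k) (Fs ! Suc k))"

definition loewy_filtration :: "('a::ring_1 set \<Rightarrow> bool) \<Rightarrow> 'a set list \<Rightarrow> bool" where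
  "loewy_filtration P Fs \<longleftrightarrow> ss_filtration P Fs \<and>
     (\<forall>Gs. ss_filtration P Gs \<longrightarrow> length Fs \<le> length Gs)"

definition rigid_regular :: "('a::ring_1 set \<Rightarrow> bool) \<Rightarrow> bool" where
  "rigid_regular P \<longleftrightarrow> (\<exists>!Fs. loewy_filtration P Fs)"

definition rigid_ring :: "'a::ring_1 itself \<Rightarrow> bool" where
  "rigid_ring _ \<longleftrightarrow> rigid_regular (left_ideal :: 'a set \<Rightarrow> bool) \<and> rigid_regular (right_ideal :: 'a set \<Rightarrow> bool)"

end

theory Submission
  imports Defs "HOL.Hull"
begin

text \<open>
  Let J be a nilpotent two-sided ideal with R/J semisimple. A subquotient B/A of a regular
  module is then semisimple exactly when J B \<subseteq> A. So in a filtration of length m with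
  semisimple factors, J^k lies in the (m - k)-th term and the k-th term lies in the annihilator
  of J^k. Consequently the Loewy filtrations are the semisimple filtrations of length \<ell> + 1,
  among them the radical filtration (J^(\<ell> - k))_k and the socle filtration
  (ann J^k)_k, and every Loewy filtration is squeezed between these two: rigidity means that
  they coincide. Semiprimarity only gives semisimplicity of R/J as a left module; on the
  right it follows from a Zorn argument on idempotents modulo J, R/J being von Neumann regular.
\<close>

text \<open>
  The left regular module (r \<cdot> x = r * x) or the right regular module seen as a left module
  over the opposite ring (r \<cdot> x = x * r). Either way \<open>\<cdot>\<close> is the product of R or of R^op,
  hence associative, so one development covers both sides.
\<close>

locale regular_module =
  fixes smult :: "'a::ring_1 \<Rightarrow> 'a \<Rightarrow> 'a"  (infixl \<open>\<cdot>\<close> 70)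
  assumes smult_side: "smult = (*) \<or> smult = (\<lambda>r x. x * r)"
begin

lemma smult_assoc: "r \<cdot> (s \<cdot> x) = (r \<cdot> s) \<cdot> x"
  using smult_side by (auto simp: mult.assoc)

lemma smult_simps:
  "1 \<cdot> x = x" "x \<cdot> 1 = x" "0 \<cdot> x = 0" "r \<cdot> 0 = 0"
  "r \<cdot> (x + y) = r \<cdot> x + r \<cdot> y" "r \<cdot> (x - y) = r \<cdot> x - r \<cdot> y"
  "(r + s) \<cdot> x = r \<cdot> x + s \<cdot> x" "(r - s) \<cdot> x = r \<cdot> x - s \<cdot> x"
  using smult_side by (auto simp: algebra_simps)

definition submodule :: "'a set \<Rightarrow> bool" where
  "submodule L \<longleftrightarrow> 0 \<in> L \<and> (\<forall>x\<in>L. \<forall>y\<in>L. x - y \<in> L) \<and> (\<forall>r x. x \<in> L \<longrightarrow> r \<cdot> x \<in> L)"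

definition annihilator :: "'a set \<Rightarrow> 'a set" where
  "annihilator S = {x. \<forall>p\<in>S. p \<cdot> x = 0}"

definition adjoin :: "'a set \<Rightarrow> 'a \<Rightarrow> 'a set" where
  "adjoin K z = {k + r \<cdot> z | k r. k \<in> K}"

lemma submodule_side:
  "smult = (*) \<and> submodule = left_ideal \<or> smult = (\<lambda>r x. x * r) \<and> submodule = right_ideal"
  using smult_side by (auto simp: fun_eq_iff submodule_def left_ideal_def right_ideal_def)

lemma submodule_zero: "submodule L \<Longrightarrow> 0 \<in> L"
  and submodule_diff: "submodule L \<Longrightarrow> x \<in> L \<Longrightarrow> y \<in> L \<Longrightarrow> x - y \<in> L"
  and submodule_smult: "submodule L \<Longrightarrow> x \<in> L \<Longrightarrow> r \<cdot> x \<in> L"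
  by (simp_all add: submodule_def)

lemma submodule_uminus: "submodule L \<Longrightarrow> x \<in> L \<Longrightarrow> - x \<in> L"
  using submodule_diff[of L 0 x] submodule_zero by force

lemma submodule_add: "submodule L \<Longrightarrow> x \<in> L \<Longrightarrow> y \<in> L \<Longrightarrow> x + y \<in> L"
  using submodule_diff[of L x "- y"] submodule_uminus by force

lemma submodule_UNIV: "submodule UNIV"
  by (simp add: submodule_def)

lemma submodule_eq_UNIV_if_one: "submodule L \<Longrightarrow> 1 \<in> L \<Longrightarrow> L = UNIV"
  using submodule_smult[of L 1] by (metis UNIV_eq_I smult_simps(2))

lemma submodule_Inter: "\<forall>L\<in>S. submodule L \<Longrightarrow> submodule (\<Inter>S)"
  by (auto simp: submodule_def)

lemma submodule_chain_Union:
  assumes "C \<noteq> {}" and "\<And>L. L \<in> C \<Longrightarrow> submodule L"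
    and "\<And>X Y. X \<in> C \<Longrightarrow> Y \<in> C \<Longrightarrow> X \<subseteq> Y \<or> Y \<subseteq> X"
  shows "submodule (\<Union>C)"
  unfolding submodule_def
proof (intro conjI ballI allI impI)
  show "0 \<in> \<Union>C" using assms(1,2) submodule_zero by blast
next
  fix x y assume "x \<in> \<Union>C" "y \<in> \<Union>C"
  then obtain X Y where "X \<in> C" "Y \<in> C" "x \<in> X" "y \<in> Y" by blast
  then show "x - y \<in> \<Union>C" using assms(2) assms(3)[of X Y] submodule_diff by blast
next
  fix r x assume "x \<in> \<Union>C" then show "r \<cdot> x \<in> \<Union>C" using assms(2) submodule_smult by blast
qed

lemma submodule_set_plus:
  assumes X: "submodule X" and Y: "submodule Y"
  shows "submodule (set_plus X Y)"
  unfolding submodule_def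
proof (intro conjI ballI allI impI)
  show "0 \<in> set_plus X Y"
    unfolding set_plus_def using submodule_zero[OF X] submodule_zero[OF Y] by force
next
  fix a b assume "a \<in> set_plus X Y" "b \<in> set_plus X Y"
  then obtain x1 y1 x2 y2 where "a = x1 + y1" "b = x2 + y2" "x1 \<in> X" "x2 \<in> X" "y1 \<in> Y" "y2 \<in> Y"
    unfolding set_plus_def by blast
  moreover have "x1 + y1 - (x2 + y2) = (x1 - x2) + (y1 - y2)" by simp
  ultimately show "a - b \<in> set_plus X Y"
    unfolding set_plus_def using submodule_diff[OF X] submodule_diff[OF Y] by blast
next
  fix r a assume "a \<in> set_plus X Y"
  then obtain x y where "a = x + y" "x \<in> X" "y \<in> Y" unfolding set_plus_def by blast
  then show "r \<cdot> a \<in> set_plus X Y"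
    unfolding set_plus_def using submodule_smult[OF X] submodule_smult[OF Y]
    by (fastforce simp: smult_simps)
qed

lemma submodule_adjoin:
  assumes K: "submodule K"
  shows "submodule (adjoin K z)"
  unfolding submodule_def
proof (intro conjI ballI allI impI)
  show "0 \<in> adjoin K z"
    unfolding adjoin_def using submodule_zero[OF K] by (intro CollectI exI[of _ 0]) (simp add: smult_simps)
next
  fix a b assume "a \<in> adjoin K z" "b \<in> adjoin K z"
  then obtain k1 r1 k2 r2 where "a = k1 + r1 \<cdot> z" "b = k2 + r2 \<cdot> z" "k1 \<in> K" "k2 \<in> K"
    unfolding adjoin_def by blast
  moreover have "k1 + r1 \<cdot> z - (k2 + r2 \<cdot> z) = (k1 - k2) + (r1 - r2) \<cdot> z"
    by (simp add: smult_simps)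
  ultimately show "a - b \<in> adjoin K z"
    unfolding adjoin_def using submodule_diff[OF K] by blast
next
  fix t a assume "a \<in> adjoin K z"
  then obtain k r where "a = k + r \<cdot> z" "k \<in> K" unfolding adjoin_def by blast
  moreover have "t \<cdot> (k + r \<cdot> z) = t \<cdot> k + (t \<cdot> r) \<cdot> z" by (simp add: smult_simps smult_assoc)
  ultimately show "t \<cdot> a \<in> adjoin K z"
    unfolding adjoin_def using submodule_smult[OF K] by fastforce
qed

lemma subset_adjoin: "K \<subseteq> adjoin K z"
  unfolding adjoin_def by (force simp: smult_simps intro: exI[of _ 0])

lemma mem_adjoin: "0 \<in> K \<Longrightarrow> z \<in> adjoin K z"
  unfolding adjoin_def by (force simp: smult_simps intro: exI[of _ 1])

end

lemma regular_module_left: "regular_module (*)"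
  and regular_module_right: "regular_module (\<lambda>r x. x * r)"
  by (simp_all add: regular_module_def)

lemma left_ideal_eq_submodule: "regular_module.submodule (*) = left_ideal"
  by (auto simp: fun_eq_iff regular_module.submodule_def[OF regular_module_left] left_ideal_def)

lemma right_ideal_eq_submodule: "regular_module.submodule (\<lambda>r x. x * r) = right_ideal"
  by (auto simp: fun_eq_iff regular_module.submodule_def[OF regular_module_right] right_ideal_def)

interpretation left: regular_module "(*)"
  rewrites "regular_module.submodule (*) = left_ideal"
  by (fact regular_module_left left_ideal_eq_submodule)+

interpretation right: regular_module "\<lambda>r x. x * r"
  rewrites "regular_module.submodule (\<lambda>r x. x * r) = right_ideal"
  by (fact regular_module_right right_ideal_eq_submodule)+

lemma set_mult_subset:
  assumes "\<And>a b. a \<in> A \<Longrightarrow> b \<in> B \<Longrightarrow> a * b \<in> C"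
    and "0 \<in> C" and "\<And>x y. x \<in> C \<Longrightarrow> y \<in> C \<Longrightarrow> x - y \<in> C"
  shows "set_mult A B \<subseteq> C"
proof
  fix x assume "x \<in> set_mult A B"
  then show "x \<in> C" by induction (use assms in auto)
qed

lemma set_mult_mono: "A \<subseteq> A' \<Longrightarrow> B \<subseteq> B' \<Longrightarrow> set_mult A B \<subseteq> set_mult A' B'"
  by (rule set_mult_subset) (auto intro: set_mult.intros)

lemma set_mult_assoc_subset: "set_mult A (set_mult B C) \<subseteq> set_mult (set_mult A B) C"
proof (rule set_mult_subset)
  fix a y assume a: "a \<in> A" and "y \<in> set_mult B C"
  from \<open>y \<in> set_mult B C\<close> show "a * y \<in> set_mult (set_mult A B) C"
  proof induction
    case (prod b c)
    then show ?case using set_mult.prod[OF set_mult.prod[OF a prod(1)] prod(2)] by (simp add: mult.assoc)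
  qed (auto simp: right_diff_distrib intro: set_mult.intros)
qed (auto intro: set_mult.intros)

lemma left_ideal_set_mult:
  assumes "\<And>r a. a \<in> A \<Longrightarrow> r * a \<in> A"
  shows "left_ideal (set_mult A B)"
  unfolding left_ideal_def
proof (intro conjI ballI allI impI)
  fix r x assume "x \<in> set_mult A B"
  then show "r * x \<in> set_mult A B"
  proof induction
    case (prod a b)
    then show ?case using set_mult.prod[OF assms[OF prod(1)] prod(2), of r] by (simp add: mult.assoc)
  qed (simp_all add: right_diff_distrib set_mult.zero set_mult.diff)
qed (auto intro: set_mult.zero set_mult.diff)

lemma right_ideal_set_mult:
  assumes "\<And>r b. b \<in> B \<Longrightarrow> b * r \<in> B"
  shows "right_ideal (set_mult A B)"
  unfolding right_ideal_def
proof (intro conjI ballI allI impI)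
  fix r x assume "x \<in> set_mult A B"
  then show "x * r \<in> set_mult A B"
  proof induction
    case (prod a b)
    then show ?case using set_mult.prod[OF prod(1) assms[OF prod(2)], of r] by (simp add: mult.assoc)
  qed (simp_all add: left_diff_distrib set_mult.zero set_mult.diff)
qed (auto intro: set_mult.zero set_mult.diff)

lemma left_ideal_set_pow: "left_ideal J \<Longrightarrow> left_ideal (set_pow J k)"
  by (cases k) (simp_all add: left.submodule_UNIV left_ideal_set_mult left.submodule_smult)

lemma right_ideal_set_pow: "right_ideal (set_pow J k)"
proof (induction k)
  case (Suc k)
  then show ?case by (simp add: right_ideal_set_mult right.submodule_smult)
qed (simp add: right.submodule_UNIV)

lemma zero_in_set_pow: "0 \<in> set_pow J k"
  by (cases k) (simp_all add: set_mult.zero)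

lemma set_pow_antimono: "k \<le> m \<Longrightarrow> set_pow J m \<subseteq> set_pow J k"
proof (rule lift_Suc_antimono_le)
  show "set_pow J (Suc n) \<subseteq> set_pow J n" for n
  proof (induction n)
    case (Suc n)
    then show ?case by (simp add: set_mult_mono)
  qed simp
qed

lemma set_pow_one: "right_ideal J \<Longrightarrow> set_pow J 1 = J"
proof
  assume "right_ideal J"
  then show "set_pow J 1 \<subseteq> J"
    by (simp add: set_mult_subset right.submodule_smult right.submodule_zero right.submodule_diff)
  show "J \<subseteq> set_pow J 1"
    using set_mult.prod[of _ J 1 UNIV] by force
qed

lemma power_in_set_pow: "c \<in> J \<Longrightarrow> c ^ k \<in> set_pow J k"
  by (induction k) (auto intro: set_mult.prod)

lemma mult_in_set_pow_Suc: "j \<in> J \<Longrightarrow> q \<in> set_pow J k \<Longrightarrow> j * q \<in> set_pow J (Suc k)"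
  by (simp add: set_mult.prod)

lemma mult_in_set_pow_Suc':
  assumes "left_ideal J"
  shows "q \<in> set_pow J k \<Longrightarrow> j \<in> J \<Longrightarrow> q * j \<in> set_pow J (Suc k)"
proof (induction k arbitrary: q)
  case 0
  then show ?case using set_mult.prod[of "q * j" J 1 UNIV] left.submodule_smult[OF assms] by simp
next
  case (Suc k)
  from \<open>q \<in> set_pow J (Suc k)\<close> show ?case
    unfolding set_pow.simps(2)
  proof induction
    case (prod a b)
    then show ?case using set_mult.prod[OF prod(1) Suc.IH[OF prod(2) Suc.prems(2)]] by (simp add: mult.assoc)
  qed (auto simp: left_diff_distrib intro: set_mult.intros)
qed

lemma set_pow_Suc_subset_set_mult:
  assumes "right_ideal J"
  shows "set_pow J (Suc k) \<subseteq> set_mult (set_pow J k) J"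
proof (induction k)
  case 0
  then show ?case using set_pow_one[OF assms] set_mult.prod[of 1 UNIV _ J] by force
next
  case (Suc k)
  have "set_pow J (Suc (Suc k)) \<subseteq> set_mult J (set_mult (set_pow J k) J)"
    using Suc by (simp add: set_mult_mono)
  also have "\<dots> \<subseteq> set_mult (set_pow J (Suc k)) J"
    by (simp add: set_mult_assoc_subset)
  finally show ?case .
qed

lemma left_ideal_jrad: "left_ideal (jrad :: 'a::ring_1 set)"
  unfolding jrad_def by (rule left.submodule_Inter) (auto simp: maximal_left_ideal_def)

lemma power_Suc_mult_rotate: "(u * v) ^ Suc k = u * (v * u) ^ k * (v :: 'a::monoid_mult)"
  by (induction k) (simp_all add: mult.assoc)

lemma sum_powers_mult_one_minus: "(\<Sum>k<n. a ^ k) * (1 - a) = (1 :: 'a::ring_1) - a ^ n"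
proof (induction n)
  case (Suc n)
  have "(\<Sum>k<Suc n. a ^ k) * (1 - a) = (\<Sum>k<n. a ^ k) * (1 - a) + a ^ n * (1 - a)"
    by (simp add: distrib_right)
  also have "\<dots> = 1 - a ^ Suc n"
    using Suc by (simp add: algebra_simps power_Suc2 power_commutes)
  finally show ?case .
qed simp

text \<open>
  If x r \<notin> L, maximality gives 1 = l + y x r, and (y x r)^(n+1) = y x (r y x)^n r = 0
  makes l = 1 - y x r left invertible.
\<close>

lemma mult_mem_maximal_left_ideal:
  assumes L: "maximal_left_ideal L" and J: "left_ideal J" "set_pow J n = {0}" and x: "x \<in> J"
  shows "x * r \<in> L"
proof (rule ccontr)
  assume "x * r \<notin> L"
  have L': "left_ideal L" "L \<noteq> UNIV" using L by (auto simp: maximal_left_ideal_def)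
  have "left.adjoin L (x * r) \<noteq> L"
    using \<open>x * r \<notin> L\<close> left.mem_adjoin[OF left.submodule_zero[OF L'(1)]] by blast
  then have "left.adjoin L (x * r) = UNIV"
    using L left.submodule_adjoin[OF L'(1)] left.subset_adjoin unfolding maximal_left_ideal_def by blast
  then obtain l y where l: "l \<in> L" and one: "1 = l + y * (x * r)"
    unfolding left.adjoin_def by blast
  define a where "a = y * x * r"
  have "r * (y * x) \<in> J"
    using left.submodule_smult[OF J(1) x, of "r * y"] by (simp add: mult.assoc)
  then have "(r * (y * x)) ^ n = 0"
    using power_in_set_pow[of _ J n] J(2) by blast
  then have "a ^ Suc n = 0"
    using power_Suc_mult_rotate[of "y * x" r n] by (simp add: a_def)
  then have "(\<Sum>k<Suc n. a ^ k) * (1 - a) = 1"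
    by (simp only: sum_powers_mult_one_minus) simp
  moreover have "1 - a = l" using one by (simp add: a_def algebra_simps mult.assoc)
  ultimately have "1 \<in> L" using left.submodule_smult[OF L'(1) l, of "\<Sum>k<Suc n. a ^ k"] by simp
  then show False using left.submodule_eq_UNIV_if_one[OF L'(1)] L'(2) by blast
qed

lemma right_ideal_jrad:
  assumes "set_pow (jrad :: 'a::ring_1 set) n = {0}"
  shows "right_ideal (jrad :: 'a set)"
proof -
  have "x * r \<in> jrad" if "x \<in> jrad" for x r :: 'a
    unfolding jrad_def using mult_mem_maximal_left_ideal[OF _ left_ideal_jrad assms that] by blast
  then show ?thesis using left_ideal_jrad unfolding right_ideal_def left_ideal_def by blast
qed

lemma left_generator_mod:
  assumes ss: "ss_subquot left_ideal J UNIV" and I: "left_ideal I" "J \<subseteq> I"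
  obtains e where "e \<in> I" "\<And>a. a \<in> I \<Longrightarrow> a - a * e \<in> J"
proof -
  obtain I' where I': "left_ideal I'" "set_plus I I' = UNIV" "I \<inter> I' = J"
    using ss I unfolding ss_subquot_def by blast
  then obtain e e' where e: "1 = e + e'" "e \<in> I" "e' \<in> I'"
    unfolding set_plus_def by blast
  have "a - a * e \<in> J" if "a \<in> I" for a
  proof -
    have "a - a * e = a * e'" using e(1) by (metis add_diff_cancel_left' mult_1_right right_diff_distrib)
    moreover have "a - a * e \<in> I" using that e(2) I(1) by (simp add: left.submodule_diff left.submodule_smult)
    ultimately show ?thesis using I' e(3) left.submodule_smult[OF I'(1)] by auto
  qed
  with e(2) show ?thesis by (rule that)
qed

lemma von_neumann_regular_mod:
  assumes JL: "left_ideal J" and ss: "ss_subquot left_ideal J UNIV"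
  obtains y where "b - b * y * b \<in> J"
proof -
  obtain e where "e \<in> left.adjoin J b" and e: "\<And>u. u \<in> left.adjoin J b \<Longrightarrow> u - u * e \<in> J"
    using left_generator_mod[OF ss left.submodule_adjoin[OF JL] left.subset_adjoin] by metis
  then obtain j y where e_eq: "e = j + y * b" and "j \<in> J" unfolding left.adjoin_def by blast
  have "b - b * y * b = (b - b * e) + b * j" by (simp add: e_eq algebra_simps)
  moreover have "b - b * e \<in> J" using e left.mem_adjoin[OF left.submodule_zero[OF JL]] by blast
  ultimately have "b - b * y * b \<in> J"
    using \<open>j \<in> J\<close> left.submodule_add[OF JL] left.submodule_smult[OF JL] by metis
  then show ?thesis by (rule that)
qed

lemma Union_left_ideal_chain_mem:
  assumes ss: "ss_subquot left_ideal J UNIV" and "C \<noteq> {}"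
    and C: "\<And>X. X \<in> C \<Longrightarrow> left_ideal X \<and> J \<subseteq> X"
    and chain: "\<And>X Y. X \<in> C \<Longrightarrow> Y \<in> C \<Longrightarrow> X \<subseteq> Y \<or> Y \<subseteq> X"
  shows "\<Union>C \<in> C"
proof -
  have "left_ideal (\<Union>C)" using left.submodule_chain_Union[OF \<open>C \<noteq> {}\<close> _ chain] C by blast
  moreover have "J \<subseteq> \<Union>C" using \<open>C \<noteq> {}\<close> C by blast
  ultimately obtain e where "e \<in> \<Union>C" and e: "\<And>u. u \<in> \<Union>C \<Longrightarrow> u - u * e \<in> J"
    using left_generator_mod[OF ss] by metis
  then obtain X where X: "X \<in> C" "e \<in> X" by blast
  have "\<Union>C \<subseteq> X"
  proof
    fix u assume "u \<in> \<Union>C"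
    then have "u - u * e \<in> X" and "u * e \<in> X"
      using e C[OF X(1)] left.submodule_smult X(2) by blast+
    then show "u \<in> X" using left.submodule_add C[OF X(1)] by fastforce
  qed
  then show ?thesis using X(1) by (metis Union_upper subset_antisym)
qed

lemma exists_maximal_idempotent_mod:
  assumes JL: "left_ideal J" and ss: "ss_subquot left_ideal J UNIV"
    and I: "right_ideal I" "J \<subseteq> I"
  obtains f where "f \<in> I" "f * f - f \<in> J"
    "\<And>h. h \<in> I \<Longrightarrow> h * h - h \<in> J \<Longrightarrow> left.adjoin J f \<subseteq> left.adjoin J h \<Longrightarrow>
      left.adjoin J h = left.adjoin J f"
proof -
  define F where "F = {left.adjoin J f | f. f \<in> I \<and> f * f - f \<in> J}"
  have "\<exists>M\<in>F. \<forall>X\<in>F. M \<subseteq> X \<longrightarrow> X = M"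
  proof (rule Zorn_Lemma2, intro ballI)
    fix C assume "C \<in> chains F"
    then have CF: "C \<subseteq> F" and Cc: "\<And>X Y. X \<in> C \<Longrightarrow> Y \<in> C \<Longrightarrow> X \<subseteq> Y \<or> Y \<subseteq> X"
      unfolding chains_def chain_subset_def by auto
    show "\<exists>U\<in>F. \<forall>X\<in>C. X \<subseteq> U"
    proof (cases "C = {}")
      case True
      have "left.adjoin J 0 \<in> F"
        unfolding F_def using right.submodule_zero[OF I(1)] left.submodule_zero[OF JL] by force
      then show ?thesis using True by blast
    next
      case False
      have "\<Union>C \<in> C"
        using Union_left_ideal_chain_mem[OF ss False _ Cc] CF left.submodule_adjoin[OF JL]
          left.subset_adjoin unfolding F_def by blast
      then show ?thesis using CF by blast
    qed
  qed
  then obtain M where "M \<in> F" and M_max: "\<And>X. X \<in> F \<Longrightarrow> M \<subseteq> X \<Longrightarrow> X = M"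
    by blast
  then obtain f where M: "M = left.adjoin J f" "f \<in> I" "f * f - f \<in> J"
    unfolding F_def by blast
  show ?thesis
  proof (rule that[OF M(2,3)])
    fix h assume "h \<in> I" "h * h - h \<in> J" "left.adjoin J f \<subseteq> left.adjoin J h"
    then show "left.adjoin J h = left.adjoin J f"
      using M_max[of "left.adjoin J h"] M(1) unfolding F_def by blast
  qed
qed

lemma idempotent_mod_combine:
  fixes f g :: "'a::ring_1"
  assumes JL: "left_ideal J" and JR: "right_ideal J"
    and ff: "f * f - f \<in> J" and gg: "g * g - g \<in> J" and fg: "f * g \<in> J"
  defines "h \<equiv> f + g - g * f"
  shows "h * h - h \<in> J" and "f * h - f \<in> J" and "h * g - g \<in> J"
proof -
  note closed = left.submodule_add[OF JL] left.submodule_diff[OF JL]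
    left.submodule_smult[OF JL] right.submodule_smult[OF JR]
  have "h * h - h = (f*f - f) + f*g - (f*g)*f + (g*g - g) - (g*g - g)*f - g*(f*f - f) - g*(f*g)
      + g*(f*g)*f"
    by (simp add: h_def algebra_simps)
  also have "\<dots> \<in> J" by (intro closed ff fg gg)
  finally show "h * h - h \<in> J" .
  have "f * h - f = (f*f - f) + f*g - (f*g)*f" by (simp add: h_def algebra_simps)
  also have "\<dots> \<in> J" by (intro closed ff fg)
  finally show "f * h - f \<in> J" .
  have "h * g - g = f * g + (g * g - g) - g * (f * g)" by (simp add: h_def algebra_simps)
  also have "\<dots> \<in> J" by (intro closed fg gg)
  finally show "h * g - g \<in> J" .
qed

text \<open>
  For b = a - f a, regularity gives g = b y idempotent modulo J with f g \<in> J; then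
  h = f + g - g f would enlarge R f + J unless g \<in> J.
\<close>

lemma maximal_idempotent_mod_absorbs:
  assumes JL: "left_ideal J" and JR: "right_ideal J" and ss: "ss_subquot left_ideal J UNIV"
    and I: "right_ideal I" "J \<subseteq> I"
    and f: "f \<in> I" "f * f - f \<in> J"
    and fmax: "\<And>h. h \<in> I \<Longrightarrow> h * h - h \<in> J \<Longrightarrow> left.adjoin J f \<subseteq> left.adjoin J h \<Longrightarrow>
      left.adjoin J h = left.adjoin J f"
    and a: "a \<in> I"
  shows "a - f * a \<in> J"
proof -
  note closed = left.submodule_add[OF JL] left.submodule_diff[OF JL] left.submodule_uminus[OF JL]
    left.submodule_smult[OF JL] right.submodule_smult[OF JR]
  note I_closed = right.submodule_add[OF I(1)] right.submodule_diff[OF I(1)]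
    right.submodule_smult[OF I(1)]
  define b where "b = a - f * a"
  have "b \<in> I" unfolding b_def using a f(1) by (intro I_closed)
  obtain y where byb: "b - b * y * b \<in> J" using von_neumann_regular_mod[OF JL ss] .
  define g where "g = b * y"
  have "g \<in> I" unfolding g_def using \<open>b \<in> I\<close> by (intro I_closed)
  have gg: "g * g - g \<in> J"
  proof -
    have "g * g - g = - ((b - b * y * b) * y)" by (simp add: g_def algebra_simps)
    then show ?thesis using byb by (simp add: closed)
  qed
  have fg: "f * g \<in> J"
  proof -
    have "f * g = - (((f * f - f) * a) * y)" by (simp add: g_def b_def algebra_simps)
    then show ?thesis using f(2) by (simp add: closed)
  qed
  define h where "h = f + g - g * f"
  note h = idempotent_mod_combine[OF JL JR f(2) gg fg, folded h_def]
  have "h \<in> I" unfolding h_def using f(1) \<open>g \<in> I\<close> by (intro I_closed)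
  have "left.adjoin J f \<subseteq> left.adjoin J h"
  proof
    fix x assume "x \<in> left.adjoin J f"
    then obtain k r where x: "x = k + r * f" "k \<in> J" unfolding left.adjoin_def by blast
    have "x = (k - r * (f * h - f)) + (r * f) * h" using x(1) by (simp add: algebra_simps)
    moreover have "k - r * (f * h - f) \<in> J" using closed(2)[OF x(2) closed(4)[OF h(2)]] .
    ultimately show "x \<in> left.adjoin J h" unfolding left.adjoin_def by blast
  qed
  then have "h \<in> left.adjoin J f"
    using fmax[OF \<open>h \<in> I\<close> h(1)] left.mem_adjoin[OF left.submodule_zero[OF JL]] by blast
  then obtain j2 z where hz: "h = j2 + z * f" "j2 \<in> J" unfolding left.adjoin_def by blast
  have "h * g = j2 * g + z * (f * g)" by (simp add: hz(1) algebra_simps)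
  then have "h * g \<in> J" using hz(2) fg by (simp add: closed)
  then have "g \<in> J" using closed(2)[OF _ h(3)] by fastforce
  have "b = (b - b * y * b) + g * b" by (simp add: g_def)
  also have "\<dots> \<in> J" using closed(1)[OF byb closed(5)[OF \<open>g \<in> J\<close>]] .
  finally show ?thesis unfolding b_def .
qed

text \<open>
  A complement of the right ideal I is {x. f x \<in> J}, where f is an idempotent modulo J with
  R f + J maximal, which acts as a left identity on I modulo J.
\<close>

lemma right_semisimple_mod_if_left:
  assumes JL: "left_ideal J" and JR: "right_ideal J" and ss: "ss_subquot left_ideal J UNIV"
  shows "ss_subquot right_ideal J UNIV"
  unfolding ss_subquot_def
proof (intro conjI allI impI)
  fix I assume "right_ideal I \<and> J \<subseteq> I \<and> I \<subseteq> UNIV"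
  then have I: "right_ideal I" "J \<subseteq> I" by auto
  obtain f where f: "f \<in> I" "f * f - f \<in> J"
    and absorbs: "\<And>a. a \<in> I \<Longrightarrow> a - f * a \<in> J"
    using exists_maximal_idempotent_mod[OF JL ss I] maximal_idempotent_mod_absorbs[OF JL JR ss I]
    by metis
  define I' where "I' = {x. f * x \<in> J}"
  have "right_ideal I'"
    unfolding right_ideal_def I'_def
    using right.submodule_zero[OF JR] right.submodule_diff[OF JR] right.submodule_smult[OF JR]
    by (auto simp: right_diff_distrib mult.assoc[symmetric])
  moreover have "J \<subseteq> I'" unfolding I'_def using left.submodule_smult[OF JL] by blast
  moreover have "set_plus I I' = UNIV"
  proof -
    have "f * (x - f * x) = - ((f * f - f) * x)" for x by (simp add: algebra_simps)
    then have "x - f * x \<in> I'" for x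
      unfolding I'_def using f(2) left.submodule_uminus[OF JL] right.submodule_smult[OF JR] by simp
    moreover have "x = f * x + (x - f * x)" for x by simp
    ultimately show ?thesis
      unfolding set_plus_def using right.submodule_smult[OF I(1) f(1)] by blast
  qed
  moreover have "I \<inter> I' = J"
  proof
    show "I \<inter> I' \<subseteq> J"
    proof
      fix a assume "a \<in> I \<inter> I'"
      then have "a - f * a \<in> J" "f * a \<in> J" using absorbs unfolding I'_def by auto
      then show "a \<in> J" using left.submodule_add[OF JL] by fastforce
    qed
  qed (use I(2) \<open>J \<subseteq> I'\<close> in blast)
  ultimately show "\<exists>K'. right_ideal K' \<and> J \<subseteq> K' \<and> K' \<subseteq> UNIV \<and> set_plus I K' = UNIV \<and> I \<inter> K' = J"
    by blast
qed simp

lemma ss_filtration_upt: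
  assumes "G 0 = {0}" and "G m = UNIV" and "\<And>k. k \<le> m \<Longrightarrow> P (G k)"
    and "\<And>k. k < m \<Longrightarrow> ss_subquot P (G k) (G (Suc k))"
  shows "ss_filtration P (map G [0..<Suc m])"
  unfolding ss_filtration_def
proof (intro conjI allI impI ballI)
  show "hd (map G [0..<Suc m]) = {0}" using assms(1) by (simp add: hd_map del: upt_Suc)
  show "last (map G [0..<Suc m]) = UNIV" using assms(2) by (simp add: last_map del: upt_Suc)
  show "P X" if "X \<in> set (map G [0..<Suc m])" for X using that assms(3) by auto
  fix k assume "Suc k < length (map G [0..<Suc m])"
  then have k: "k < m" by simp
  then show "map G [0..<Suc m] ! k \<subseteq> map G [0..<Suc m] ! Suc k"
    and "ss_subquot P (map G [0..<Suc m] ! k) (map G [0..<Suc m] ! Suc k)"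
    using assms(4)[OF k] by (simp_all add: ss_subquot_def nth_append del: upt_Suc)
qed simp

lemma ss_filtration_nth:
  assumes "ss_filtration P Fs"
  shows "Fs ! 0 = {0}" and "Fs ! (length Fs - 1) = UNIV"
    and "k < length Fs \<Longrightarrow> P (Fs ! k)"
    and "Suc k < length Fs \<Longrightarrow> ss_subquot P (Fs ! k) (Fs ! Suc k)"
  using assms unfolding ss_filtration_def by (auto simp: hd_conv_nth last_conv_nth nth_mem)

locale semiprimary_regular_module = regular_module +
  fixes J :: "'a set"
  assumes left_ideal_J: "left_ideal J" and right_ideal_J: "right_ideal J"
    and nilpotent_J: "\<exists>n. set_pow J n = {0}"
    and semisimple_mod_J: "ss_subquot submodule J UNIV"
begin

definition nilpotency_index :: nat where
  "nilpotency_index = (LEAST n. set_pow J n = {0})"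

lemma set_pow_eq_zero_iff: "set_pow J n = {0} \<longleftrightarrow> nilpotency_index \<le> n"
proof
  show "set_pow J n = {0} \<Longrightarrow> nilpotency_index \<le> n"
    by (simp add: nilpotency_index_def Least_le)
  have "set_pow J nilpotency_index = {0}"
    unfolding nilpotency_index_def using nilpotent_J by (rule LeastI_ex)
  then show "nilpotency_index \<le> n \<Longrightarrow> set_pow J n = {0}"
    using set_pow_antimono[of nilpotency_index n J] zero_in_set_pow[of J n] by blast
qed

lemma submodule_set_pow: "submodule (set_pow J k)"
  using submodule_side left_ideal_set_pow[OF left_ideal_J] right_ideal_set_pow by auto

lemma smult_mem_set_pow: "q \<in> set_pow J k \<Longrightarrow> q \<cdot> r \<in> set_pow J k"
  using smult_side left.submodule_smult[OF left_ideal_set_pow[OF left_ideal_J]]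
    right.submodule_smult[OF right_ideal_set_pow] by auto

lemma smult_mem_set_pow_Suc:
  assumes "j \<in> J" and "q \<in> set_pow J k"
  shows "j \<cdot> q \<in> set_pow J (Suc k)" and "q \<cdot> j \<in> set_pow J (Suc k)"
  using smult_side mult_in_set_pow_Suc[OF assms] mult_in_set_pow_Suc'[OF left_ideal_J assms(2,1)]
  by auto

lemma set_pow_Suc_subsetI:
  assumes C: "0 \<in> C" "\<And>x y. x \<in> C \<Longrightarrow> y \<in> C \<Longrightarrow> x - y \<in> C"
    and gen: "\<And>j q. j \<in> J \<Longrightarrow> q \<in> set_pow J k \<Longrightarrow> j \<cdot> q \<in> C"
  shows "set_pow J (Suc k) \<subseteq> C"
  using smult_side
proof
  assume "smult = (*)"
  then have "set_mult J (set_pow J k) \<subseteq> C"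
    by (intro set_mult_subset C) (use gen in simp)
  then show ?thesis by simp
next
  assume "smult = (\<lambda>r x. x * r)"
  then have "set_mult (set_pow J k) J \<subseteq> C"
    by (intro set_mult_subset C) (use gen in simp)
  then show ?thesis using set_pow_Suc_subset_set_mult[OF right_ideal_J, of k] by blast
qed

lemma set_pow_Suc_subsetI':
  assumes C: "0 \<in> C" "\<And>x y. x \<in> C \<Longrightarrow> y \<in> C \<Longrightarrow> x - y \<in> C"
    and gen: "\<And>q j. q \<in> set_pow J k \<Longrightarrow> j \<in> J \<Longrightarrow> q \<cdot> j \<in> C"
  shows "set_pow J (Suc k) \<subseteq> C"
  using smult_side
proof
  assume "smult = (*)"
  then have "set_mult (set_pow J k) J \<subseteq> C"
    by (intro set_mult_subset C) (use gen in simp)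
  then show ?thesis using set_pow_Suc_subset_set_mult[OF right_ideal_J, of k] by blast
next
  assume "smult = (\<lambda>r x. x * r)"
  then have "set_mult J (set_pow J k) \<subseteq> C"
    by (intro set_mult_subset C) (use gen in simp)
  then show ?thesis by simp
qed

text \<open>
  Downward induction on k: if J^(k+1) B \<subseteq> A, a complement K of J B + A in B/A satisfies
  J^k K \<subseteq> K \<inter> (J B + A) = A.
\<close>

lemma smult_mem_if_semisimple:
  assumes A: "submodule A" and B: "submodule B" and ss: "ss_subquot submodule A B"
    and "j \<in> J" and "b \<in> B"
  shows "j \<cdot> b \<in> A"
proof -
  define X where "X = submodule hull (A \<union> {j \<cdot> b | j b. j \<in> J \<and> b \<in> B})"
  have "A \<subseteq> B" using ss by (simp add: ss_subquot_def)
  have X: "submodule X" unfolding X_def by (rule hull_in) (simp add: submodule_Inter)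
  have JB_X: "j \<cdot> b \<in> X" if "j \<in> J" "b \<in> B" for j b
    unfolding X_def by (rule hull_inc) (use that in blast)
  have "A \<subseteq> X" unfolding X_def by (rule order_trans[OF Un_upper1 hull_subset])
  moreover have "X \<subseteq> B"
    unfolding X_def
    by (rule hull_minimal) (use \<open>A \<subseteq> B\<close> B submodule_smult in auto)
  ultimately obtain K where K: "submodule K" "K \<subseteq> B" "set_plus X K = B" "X \<inter> K = A"
    using ss X unfolding ss_subquot_def by blast
  let ?P = "\<lambda>k. \<forall>q\<in>set_pow J k. \<forall>b\<in>B. q \<cdot> b \<in> A"
  have "?P 1"
  proof (rule inc_induct[of 1 "Suc nilpotency_index"])
    show "?P (Suc nilpotency_index)"
      using set_pow_eq_zero_iff[of "Suc nilpotency_index"] submodule_zero[OF A]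
      by (simp add: smult_simps)
  next
    fix k assume "1 \<le> k" and IH: "?P (Suc k)"
    define Y where "Y = {x. \<forall>q\<in>set_pow J k. q \<cdot> x \<in> A}"
    have "submodule Y"
      unfolding submodule_def Y_def using submodule_zero[OF A] submodule_diff[OF A]
      by (auto simp: smult_simps smult_assoc smult_mem_set_pow)
    have "j \<cdot> b \<in> Y" if "j \<in> J" "b \<in> B" for j b
      unfolding Y_def using IH smult_mem_set_pow_Suc(2)[OF \<open>j \<in> J\<close>] \<open>b \<in> B\<close>
      by (simp add: smult_assoc del: set_pow.simps)
    then have "X \<subseteq> Y"
      unfolding X_def using \<open>submodule Y\<close> submodule_smult[OF A]
      by (intro hull_minimal) (auto simp: Y_def)
    show "?P k"
    proof (intro ballI)
      fix q b assume q: "q \<in> set_pow J k" and "b \<in> B"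
      then obtain x c where "b = x + c" "x \<in> X" "c \<in> K"
        using K(3) unfolding set_plus_def by blast
      have "q \<cdot> x \<in> A" using \<open>X \<subseteq> Y\<close> \<open>x \<in> X\<close> q by (auto simp: Y_def)
      moreover have "q \<in> J"
        using q \<open>1 \<le> k\<close> set_pow_antimono[of 1 k J] set_pow_one[OF right_ideal_J] by blast
      then have "q \<cdot> c \<in> A"
        using JB_X K(2,4) submodule_smult[OF K(1) \<open>c \<in> K\<close>] \<open>c \<in> K\<close> by blast
      ultimately show "q \<cdot> b \<in> A"
        using \<open>b = x + c\<close> submodule_add[OF A] by (simp add: smult_simps)
    qed
  qed simp
  then show ?thesis using assms(4,5) set_pow_one[OF right_ideal_J] by simp
qed

lemma exists_maximal_disjoint_submodule:
  assumes "submodule A" and "A \<subseteq> N" and "A \<subseteq> B"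
  obtains K where "submodule K" "A \<subseteq> K" "K \<subseteq> B" "N \<inter> K = A"
    "\<And>K'. submodule K' \<Longrightarrow> K \<subseteq> K' \<Longrightarrow> K' \<subseteq> B \<Longrightarrow> N \<inter> K' = A \<Longrightarrow> K' = K"
proof -
  define S where "S = {K. submodule K \<and> A \<subseteq> K \<and> K \<subseteq> B \<and> N \<inter> K = A}"
  have "\<exists>M\<in>S. \<forall>X\<in>S. M \<subseteq> X \<longrightarrow> X = M"
  proof (rule subset_Zorn_nonempty)
    show "S \<noteq> {}" using assms unfolding S_def by blast
  next
    fix C assume C: "C \<noteq> {}" "subset.chain S C"
    then have "C \<subseteq> S" and "\<And>X Y. X \<in> C \<Longrightarrow> Y \<in> C \<Longrightarrow> X \<subseteq> Y \<or> Y \<subseteq> X"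
      by (auto simp: subset_chain_def)
    then have "submodule (\<Union>C)" using submodule_chain_Union[OF C(1)] unfolding S_def by blast
    then show "\<Union>C \<in> S" using \<open>C \<subseteq> S\<close> C(1) unfolding S_def by blast
  qed
  then obtain K where "K \<in> S" and K_max: "\<And>X. X \<in> S \<Longrightarrow> K \<subseteq> X \<Longrightarrow> X = K"
    by blast
  show ?thesis
  proof (rule that)
    show "submodule K" "A \<subseteq> K" "K \<subseteq> B" "N \<inter> K = A" using \<open>K \<in> S\<close> unfolding S_def by auto
    fix K' assume "submodule K'" "K \<subseteq> K'" "K' \<subseteq> B" "N \<inter> K' = A"
    then show "K' = K" using K_max[of K'] \<open>A \<subseteq> K\<close> unfolding S_def by blast
  qed
qed

lemma semisimple_if_annihilated:
  assumes A: "submodule A" and B: "submodule B" and "A \<subseteq> B"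
    and ann: "\<And>j b. j \<in> J \<Longrightarrow> b \<in> B \<Longrightarrow> j \<cdot> b \<in> A"
  shows "ss_subquot submodule A B"
  unfolding ss_subquot_def
proof (intro conjI allI impI)
  fix N assume "submodule N \<and> A \<subseteq> N \<and> N \<subseteq> B"
  then have N: "submodule N" "A \<subseteq> N" "N \<subseteq> B" by auto
  obtain K where K: "submodule K" "A \<subseteq> K" "K \<subseteq> B" "N \<inter> K = A"
    and K_max: "\<And>K'. submodule K' \<Longrightarrow> K \<subseteq> K' \<Longrightarrow> K' \<subseteq> B \<Longrightarrow> N \<inter> K' = A \<Longrightarrow> K' = K"
    using exists_maximal_disjoint_submodule[OF A N(2) \<open>A \<subseteq> B\<close>] by blast
  define NK where "NK = set_plus N K"
  have NK: "submodule NK" unfolding NK_def by (rule submodule_set_plus[OF N(1) K(1)])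
  have "K \<subseteq> NK" "N \<subseteq> NK"
    unfolding NK_def set_plus_def using submodule_zero[OF N(1)] submodule_zero[OF K(1)] by force+
  have "B \<subseteq> NK"
  proof
    fix m assume "m \<in> B"
    define I where "I = {r. r \<cdot> m \<in> NK}"
    have "submodule I"
      unfolding submodule_def I_def using submodule_zero[OF NK] submodule_diff[OF NK]
        submodule_smult[OF NK] by (auto simp: smult_simps smult_assoc[symmetric])
    moreover have "J \<subseteq> I" unfolding I_def using ann \<open>m \<in> B\<close> K(2) \<open>K \<subseteq> NK\<close> by blast
    ultimately obtain I' where I': "submodule I'" "set_plus I I' = UNIV" "I \<inter> I' = J"
      using semisimple_mod_J unfolding ss_subquot_def by blast
    then obtain i e where "1 = i + e" "i \<in> I" "e \<in> I'" unfolding set_plus_def by blast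
    have "N \<inter> adjoin K (e \<cdot> m) \<subseteq> A"
    proof
      fix z assume "z \<in> N \<inter> adjoin K (e \<cdot> m)"
      then obtain k r where z: "z \<in> N" "z = k + r \<cdot> (e \<cdot> m)" "k \<in> K"
        unfolding adjoin_def by blast
      have "(r \<cdot> e) \<cdot> m = z - k" by (simp add: z(2) smult_assoc)
      also have "\<dots> \<in> NK" using submodule_diff[OF NK] \<open>N \<subseteq> NK\<close> \<open>K \<subseteq> NK\<close> z(1,3) by blast
      finally have "r \<cdot> e \<in> I \<inter> I'" unfolding I_def using submodule_smult[OF I'(1) \<open>e \<in> I'\<close>] by simp
      then have "(r \<cdot> e) \<cdot> m \<in> K" using ann \<open>m \<in> B\<close> I'(3) K(2) by blast
      then have "z \<in> K" using z(2,3) submodule_add[OF K(1)] by (simp add: smult_assoc)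
      then show "z \<in> A" using z(1) K(4) by blast
    qed
    then have "N \<inter> adjoin K (e \<cdot> m) = A" using N(2) K(2) subset_adjoin[of K "e \<cdot> m"] by blast
    moreover have "adjoin K (e \<cdot> m) \<subseteq> B"
    proof
      fix y assume "y \<in> adjoin K (e \<cdot> m)"
      then obtain k r where "y = k + r \<cdot> (e \<cdot> m)" "k \<in> K" unfolding adjoin_def by blast
      then show "y \<in> B"
        using submodule_add[OF B _ submodule_smult[OF B submodule_smult[OF B \<open>m \<in> B\<close>]]] K(3)
        by blast
    qed
    ultimately have "adjoin K (e \<cdot> m) = K"
      using K_max[OF submodule_adjoin[OF K(1)] subset_adjoin] by blast
    then have "e \<in> I"
      unfolding I_def using mem_adjoin[OF submodule_zero[OF K(1)]] \<open>K \<subseteq> NK\<close> by blast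
    then have "1 \<in> I" using \<open>1 = i + e\<close> \<open>i \<in> I\<close> submodule_add[OF \<open>submodule I\<close>] by metis
    then show "m \<in> NK" unfolding I_def by (simp add: smult_simps)
  qed
  moreover have "NK \<subseteq> B"
    unfolding NK_def set_plus_def using N(3) K(3) submodule_add[OF B] by blast
  ultimately show "\<exists>K'. submodule K' \<and> A \<subseteq> K' \<and> K' \<subseteq> B \<and> set_plus N K' = B \<and> N \<inter> K' = A"
    using K unfolding NK_def by blast
qed fact

lemma set_pow_subset_filtration:
  assumes F: "ss_filtration submodule Fs" and len: "length Fs = Suc m"
  shows "k \<le> m \<Longrightarrow> set_pow J k \<subseteq> Fs ! (m - k)"
proof (induction k)
  case 0
  then show ?case using ss_filtration_nth(2)[OF F] len by simp
next
  case (Suc k)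
  have "Suc (m - Suc k) < length Fs" and m_k: "Suc (m - Suc k) = m - k" using Suc.prems len by auto
  note F_k = ss_filtration_nth(3,4)[OF F, of "m - Suc k"] ss_filtration_nth(3)[OF F, of "m - k"]
  show ?case
  proof (rule set_pow_Suc_subsetI)
    fix j q assume "j \<in> J" "q \<in> set_pow J k"
    then show "j \<cdot> q \<in> Fs ! (m - Suc k)"
      using smult_mem_if_semisimple F_k Suc m_k len \<open>Suc (m - Suc k) < length Fs\<close> by auto
  qed (use F_k len in \<open>auto intro: submodule_zero submodule_diff\<close>)
qed

lemma nilpotency_index_less_length:
  assumes F: "ss_filtration submodule Fs"
  shows "nilpotency_index < length Fs"
proof -
  obtain m where len: "length Fs = Suc m" using F unfolding ss_filtration_def by (cases Fs) auto
  then have "set_pow J m = {0}"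
    using set_pow_subset_filtration[OF F len, of m] ss_filtration_nth(1)[OF F] zero_in_set_pow
    by auto
  then show ?thesis using len set_pow_eq_zero_iff by simp
qed

lemma filtration_subset_annihilator:
  assumes F: "ss_filtration submodule Fs"
  shows "k < length Fs \<Longrightarrow> Fs ! k \<subseteq> annihilator (set_pow J k)"
proof (induction k)
  case 0
  then show ?case using ss_filtration_nth(1)[OF F] by (simp add: annihilator_def smult_simps)
next
  case (Suc k)
  note F_k = ss_filtration_nth(3,4)[OF F, of k] ss_filtration_nth(3)[OF F, of "Suc k"]
  show ?case
  proof
    fix x assume x: "x \<in> Fs ! Suc k"
    have "set_pow J (Suc k) \<subseteq> {p. p \<cdot> x = 0}"
    proof (rule set_pow_Suc_subsetI')
      fix q j assume "q \<in> set_pow J k" "j \<in> J"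
      moreover have "j \<cdot> x \<in> Fs ! k" using smult_mem_if_semisimple F_k Suc.prems \<open>j \<in> J\<close> x by simp
      ultimately show "q \<cdot> j \<in> {p. p \<cdot> x = 0}"
        using Suc by (auto simp: annihilator_def smult_assoc[symmetric])
    qed (auto simp: smult_simps)
    then show "x \<in> annihilator (set_pow J (Suc k))" unfolding annihilator_def by blast
  qed
qed

lemma annihilator_set_pow_nilpotency_index: "annihilator (set_pow J nilpotency_index) = UNIV"
  using set_pow_eq_zero_iff[of nilpotency_index] by (simp add: annihilator_def smult_simps)

lemma radical_filtration:
  "ss_filtration submodule (map (\<lambda>k. set_pow J (nilpotency_index - k)) [0..<Suc nilpotency_index])"
proof (rule ss_filtration_upt)
  fix k assume "k < nilpotency_index"
  then have "Suc (nilpotency_index - Suc k) = nilpotency_index - k" by simp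
  then show "ss_subquot submodule (set_pow J (nilpotency_index - k)) (set_pow J (nilpotency_index - Suc k))"
    using smult_mem_set_pow_Suc(1)
    by (intro semisimple_if_annihilated submodule_set_pow set_pow_antimono) fastforce+
qed (simp_all add: set_pow_eq_zero_iff submodule_set_pow)

lemma submodule_annihilator_set_pow: "submodule (annihilator (set_pow J k))"
  unfolding submodule_def annihilator_def
  by (auto simp: smult_simps smult_assoc smult_mem_set_pow)

lemma socle_filtration:
  "ss_filtration submodule (map (\<lambda>k. annihilator (set_pow J k)) [0..<Suc nilpotency_index])"
proof (rule ss_filtration_upt)
  show "annihilator (set_pow J 0) = {0}"
    by (auto simp: annihilator_def smult_simps) (metis smult_simps(1))
  fix k
  have "annihilator (set_pow J k) \<subseteq> annihilator (set_pow J (Suc k))"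
    using set_pow_antimono[of k "Suc k" J] unfolding annihilator_def by auto
  moreover have "j \<cdot> b \<in> annihilator (set_pow J k)"
    if "j \<in> J" "b \<in> annihilator (set_pow J (Suc k))" for j b
    using that smult_mem_set_pow_Suc(2)[OF \<open>j \<in> J\<close>]
    by (auto simp: annihilator_def smult_assoc simp del: set_pow.simps)
  ultimately show "ss_subquot submodule (annihilator (set_pow J k)) (annihilator (set_pow J (Suc k)))"
    by (intro semisimple_if_annihilated submodule_annihilator_set_pow)
qed (simp_all add: annihilator_set_pow_nilpotency_index submodule_annihilator_set_pow)

lemma loewy_filtration_iff:
  "loewy_filtration submodule Fs \<longleftrightarrow> ss_filtration submodule Fs \<and> length Fs = Suc nilpotency_index"
  using radical_filtration nilpotency_index_less_length
  unfolding loewy_filtration_def by (fastforce simp del: upt_Suc)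

lemma loewy_filtration_between:
  assumes "loewy_filtration submodule Fs" and "k \<le> nilpotency_index"
  shows "set_pow J (nilpotency_index - k) \<subseteq> Fs ! k"
    and "Fs ! k \<subseteq> annihilator (set_pow J k)"
  using assms set_pow_subset_filtration[of Fs nilpotency_index "nilpotency_index - k"]
    filtration_subset_annihilator[of Fs k]
  by (auto simp: loewy_filtration_iff)

lemma rigid_regular_iff:
  "rigid_regular submodule \<longleftrightarrow>
    (\<forall>i\<in>{1..nilpotency_index}. annihilator (set_pow J (nilpotency_index - i)) = set_pow J i)"
  (is "_ \<longleftrightarrow> ?socle_eq_radical")
proof -
  let ?l = nilpotency_index
  let ?R = "map (\<lambda>k. set_pow J (?l - k)) [0..<Suc ?l]"
  let ?S = "map (\<lambda>k. annihilator (set_pow J k)) [0..<Suc ?l]"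
  have R: "loewy_filtration submodule ?R" and S: "loewy_filtration submodule ?S"
    using radical_filtration socle_filtration by (simp_all add: loewy_filtration_iff)
  have "?R = ?S \<longleftrightarrow> ?socle_eq_radical"
  proof -
    have "?R = ?S \<longleftrightarrow> (\<forall>k\<le>?l. set_pow J (?l - k) = annihilator (set_pow J k))"
      by (auto simp: list_eq_iff_nth_eq less_Suc_eq_le simp del: upt_Suc)
    also have "\<dots> \<longleftrightarrow> ?socle_eq_radical"
    proof
      assume H: "\<forall>k\<le>?l. set_pow J (?l - k) = annihilator (set_pow J k)"
      show ?socle_eq_radical
      proof
        fix i assume "i \<in> {1..?l}"
        then show "annihilator (set_pow J (?l - i)) = set_pow J i" using H[rule_format, of "?l - i"] by auto
      qed
    next
      assume H: ?socle_eq_radical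
      show "\<forall>k\<le>?l. set_pow J (?l - k) = annihilator (set_pow J k)"
      proof (intro allI impI)
        fix k assume "k \<le> ?l"
        then consider "k = ?l" | "?l - k \<in> {1..?l}" by fastforce
        then show "set_pow J (?l - k) = annihilator (set_pow J k)"
        proof cases
          case 1
          then show ?thesis using annihilator_set_pow_nilpotency_index by simp
        next
          case 2
          then show ?thesis using bspec[OF H 2] by (simp add: diff_diff_cancel[OF \<open>k \<le> ?l\<close>])
        qed
      qed
    qed
    finally show ?thesis .
  qed
  moreover have "rigid_regular submodule \<longleftrightarrow> ?R = ?S"
  proof
    show "rigid_regular submodule \<Longrightarrow> ?R = ?S" using R S unfolding rigid_regular_def by blast
    assume "?R = ?S"
    have "Fs = ?R" if "loewy_filtration submodule Fs" for Fs
    proof (rule nth_equalityI)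
      show "length Fs = length ?R" using that by (simp add: loewy_filtration_iff)
      fix k assume "k < length Fs"
      then have "k \<le> ?l" using that by (simp add: loewy_filtration_iff)
      then show "Fs ! k = ?R ! k"
        using loewy_filtration_between[OF that] arg_cong[OF \<open>?R = ?S\<close>, of "\<lambda>xs. xs ! k"]
        by (simp del: upt_Suc) blast
    qed
    then show "rigid_regular submodule" unfolding rigid_regular_def using R by blast
  qed
  ultimately show ?thesis by blast
qed

end

theorem lemma1p1:
  fixes J :: "'a::ring_1 set" and l :: nat
  assumes "semiprimary TYPE('a)"
    and "J = jrad"
    and "l = loewy_length TYPE('a)"
  shows "rigid_ring TYPE('a) \<longleftrightarrow>
    (\<forall>i\<in>{1..l}. {x. \<forall>j\<in>set_pow J (l - i). j * x = 0} = set_pow J i \<and>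
                  set_pow J i = {x. \<forall>j\<in>set_pow J (l - i). x * j = 0})"
proof -
  obtain n where nil: "set_pow J n = {0}" and ss: "ss_subquot left_ideal J UNIV"
    using assms(1,2) unfolding semiprimary_def by blast
  have JL: "left_ideal J" and JR: "right_ideal J"
    using left_ideal_jrad right_ideal_jrad nil assms(2) by auto
  have ss_right: "ss_subquot right_ideal J UNIV"
    by (rule right_semisimple_mod_if_left[OF JL JR ss])
  interpret L: semiprimary_regular_module "(*)" J
    rewrites "regular_module.submodule (*) = left_ideal"
    by (intro semiprimary_regular_module.intro semiprimary_regular_module_axioms.intro
        regular_module_left JL JR exI[of _ n] nil) (simp_all add: left_ideal_eq_submodule ss)
  interpret R: semiprimary_regular_module "\<lambda>r x. x * r" J
    rewrites "regular_module.submodule (\<lambda>r x. x * r) = right_ideal"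
    by (intro semiprimary_regular_module.intro semiprimary_regular_module_axioms.intro
        regular_module_right JL JR exI[of _ n] nil) (simp_all add: right_ideal_eq_submodule ss_right)
  have l: "L.nilpotency_index = l" "R.nilpotency_index = l"
    unfolding L.nilpotency_index_def R.nilpotency_index_def
    by (simp_all add: assms(2,3) loewy_length_def)
  show ?thesis
    unfolding rigid_ring_def L.rigid_regular_iff R.rigid_regular_iff l
      left.annihilator_def right.annihilator_def ball_conj_distrib
    by (simp only: eq_commute[of "set_pow J i" for i])
qed

end
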